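(* Fix $\rho\in(0,1)$. Any randomized sampling/histogramming partitioning algorithm (model in the context) that, for every input, achieves a $2$-balanced partition within a single superstep with probability greater than $\rho$ must use $\Omega(p\log p)$ samples, for all sufficiently large $p$ (and sufficiently large $N$).
   Context: Model: $N$ distinct keys from a totally ordered set (only comparisons available) are distributed across $p$ processors, $N/p$ keys per processor; $R(x)$ is the global rank of key $x$. The algorithm proceeds in supersteps. In each superstep, processors choose keys from their local inputs as samples (the choice may depend on local input, on all information made available in earlier supersteps, and on random bits); the global ranks of all samples are then computed and made known to all processors. At the end, the algorithm outputs splitters $s_1,\dots,s_{p-1}$ chosen among the sampled keys. With $R(s_0)=0$, $R(s_p)=N$, the partition is $2$-balanced if $R(s_{i+1})-R(s_i)\le 2\frac{N}{p}$ for all $i\in\{0,\dots,p-1\}$. *)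

theory Defs
  imports "HOL-Probability.Probability"
begin

text \<open>
Processor i < p holds
N div p keys; since only comparisons are available and nothing has been
communicated before the first superstep, a processor can only identify a local
key by its position j < N div p in its locally sorted input.  An input is
therefore described by the global ranks r i j (in 1..N) of the j-th smallest
key of processor i.
\<close>

definition valid_input :: "nat \<Rightarrow> nat \<Rightarrow> (nat \<Rightarrow> nat \<Rightarrow> nat) \<Rightarrow> bool" where
  "valid_input N p r \<longleftrightarrow>
     bij_betw (\<lambda>(i, j). r i j) ({..<p} \<times> {..<N div p}) {1..N} \<and>
     (\<forall>i<p. \<forall>j j'. j < j' \<and> j' < N div p \<longrightarrow> r i j < r i j')"

definition positions :: "nat \<Rightarrow> nat \<Rightarrow> (nat \<times> nat) set" where
  "positions N p = {..<p} \<times> {..<N div p}"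

text \<open>A deterministic single-superstep strategy: a set of sampled positions,
and a rule that picks the splitters (as positions) from the revealed
information, namely the global ranks of the samples.\<close>
type_synonym strategy =
  "(nat \<times> nat) set \<times> ((nat \<times> nat \<Rightarrow> nat option) \<Rightarrow> (nat \<times> nat) list)"

definition observation :: "(nat \<Rightarrow> nat \<Rightarrow> nat) \<Rightarrow> (nat \<times> nat) set \<Rightarrow> (nat \<times> nat \<Rightarrow> nat option)" where
  "observation r S = (\<lambda>(i, j). if (i, j) \<in> S then Some (r i j) else None)"

text \<open>2-balanced: splitter ranks rs = [R(s_1),...,R(s_{p-1})], R(s_0)=0, R(s_p)=N.\<close>
definition two_balanced :: "nat \<Rightarrow> nat \<Rightarrow> nat list \<Rightarrow> bool" where
  "two_balanced N p rs \<longleftrightarrow>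
     length rs = p - 1 \<and>
     (let R = 0 # rs @ [N] in
        \<forall>i<p. real (R ! (i + 1)) - real (R ! i) \<le> 2 * real N / real p)"

definition succeeds :: "nat \<Rightarrow> nat \<Rightarrow> (nat \<Rightarrow> nat \<Rightarrow> nat) \<Rightarrow> strategy \<Rightarrow> bool" where
  "succeeds N p r st =
     (let S = fst st; out = snd st (observation r S) in
        length out = p - 1 \<and> set out \<subseteq> S \<and>
        two_balanced N p (map (\<lambda>(i, j). r i j) out))"

text \<open>A randomized algorithm is a probability distribution over deterministic
strategies (random bits fixed in advance).\<close>

end

theory Submission
  imports Defs
begin

(* Yao's principle for a uniform distribution over hard inputs.  Cut the local positions of every
   processor into d = p div 8 blocks of L = n div d keys.  For every choice of sets A_q of
   h = 4 d processors, one for each block q, there is an input on which the lowest h L >= 2 n ranks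
   of the q-th band of ranks are held by block q of the processors in A_q; a 2-balanced partition
   must put a splitter among them, so it has to sample block q of some processor of A_q, for
   every q.  A strategy with fewer than p ln p / 128 samples samples block q of at most
   (ln p) / 4 processors for more than p / 32 blocks q, and a random h-set avoids such a set of
   processors with probability at least 4^(-(ln p)/4) >= 1 / sqrt p.  The A_q being independent,
   the strategy succeeds on at most a fraction (1 - 1 / sqrt p)^(p/32) <= exp (- sqrt p / 32)
   of the hard inputs, which is at most rho once p >= (32 ln (1/rho))^2.  Averaging over the
   strategies of the algorithm contradicts a success probability above rho on every input. *)

(* The position of i when the elements of A are listed first, each part in increasing order. *)
definition slot :: "nat set \<Rightarrow> nat \<Rightarrow> nat" where
  "slot A i = (if i \<in> A then card (A \<inter> {..<i}) else card A + card ({..<i} - A))"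

lemma slot_less_card_iff:
  assumes "finite A"
  shows "slot A i < card A \<longleftrightarrow> i \<in> A"
proof -
  have "card (A \<inter> {..<i}) < card A" if "i \<in> A"
    using assms that by (intro psubset_card_mono) auto
  then show ?thesis by (auto simp: slot_def)
qed

lemma slot_less:
  assumes "A \<subseteq> {..<p}" "i < p"
  shows "slot A i < p"
proof (cases "i \<in> A")
  case True
  have "card A \<le> p" using card_mono[OF _ assms(1)] by simp
  with True show ?thesis
    using slot_less_card_iff[of A i] finite_subset[OF assms(1)] by simp
next
  case False
  have "card ({..<i} - A) < card ({..<p} - A)"
    using False assms by (intro psubset_card_mono) auto
  also have "\<dots> = p - card A"
    using assms(1) finite_subset[OF assms(1)] by (simp add: card_Diff_subset)
  finally show ?thesis using False by (simp add: slot_def)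
qed

lemma slot_strict_mono:
  assumes "finite A" "i < i'" "i \<in> A \<longleftrightarrow> i' \<in> A"
  shows "slot A i < slot A i'"
proof (cases "i \<in> A")
  case True
  have "card (A \<inter> {..<i}) < card (A \<inter> {..<i'})"
    using True assms by (intro psubset_card_mono) auto
  then show ?thesis using True assms(3) by (simp add: slot_def)
next
  case False
  have "card ({..<i} - A) < card ({..<i'} - A)"
    using False assms by (intro psubset_card_mono) auto
  then show ?thesis using False assms(3) by (simp add: slot_def)
qed

lemma inj_slot:
  assumes "finite A"
  shows "inj (slot A)"
proof (rule linorder_inj_onI')
  fix i i' :: nat assume "i < i'"
  show "slot A i \<noteq> slot A i'"
  proof (cases "i \<in> A \<longleftrightarrow> i' \<in> A")
    case True
    then show ?thesis using slot_strict_mono[OF assms \<open>i < i'\<close>] by simp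
  next
    case False
    then show ?thesis using slot_less_card_iff[OF assms, of i] slot_less_card_iff[OF assms, of i'] by auto
  qed
qed

lemma bounded_steps_hit_window:
  fixes R :: "nat list"
  assumes "\<And>k. Suc k < length R \<Longrightarrow> R ! Suc k \<le> R ! k + W"
    and "R \<noteq> []" "hd R \<le> a" "a + W < last R"
  shows "\<exists>x\<in>set R. a < x \<and> x \<le> a + W"
  using assms
proof (induction R)
  case Nil
  then show ?case by simp
next
  case (Cons x R)
  show ?case
  proof (cases "R = []")
    case True
    with Cons.prems show ?thesis by simp
  next
    case nonempty: False
    have step: "hd R \<le> x + W" using Cons.prems(1)[of 0] nonempty by (simp add: hd_conv_nth)
    show ?thesis
    proof (cases "hd R \<le> a")
      case True
      have "\<exists>y\<in>set R. a < y \<and> y \<le> a + W"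
      proof (rule Cons.IH)
        show "R ! Suc k \<le> R ! k + W" if "Suc k < length R" for k
          using Cons.prems(1)[of "Suc k"] that by simp
      qed (use Cons.prems nonempty True in simp_all)
      then show ?thesis by auto
    next
      case False
      then show ?thesis using step Cons.prems(3) nonempty by (auto intro!: bexI[of _ "hd R"])
    qed
  qed
qed

lemma two_balanced_hits_window:
  assumes "two_balanced (p * n) p rs" "a + 2 * n < p * n"
  shows "\<exists>x\<in>set rs. a < x \<and> x \<le> a + 2 * n"
proof -
  define R where "R = 0 # rs @ [p * n]"
  have p: "0 < p" using assms(2) by (cases p) auto
  have len: "length R = p + 1" using assms(1) p by (simp add: R_def two_balanced_def)
  have "R ! Suc k \<le> R ! k + 2 * n" if "Suc k < length R" for k
  proof -
    have "real (R ! (k + 1)) - real (R ! k) \<le> 2 * real (p * n) / real p"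
      using assms(1) that len unfolding two_balanced_def Let_def R_def by auto
    then have "real (R ! Suc k) \<le> real (R ! k + 2 * n)" using p by simp
    then show ?thesis by (simp only: of_nat_le_iff)
  qed
  then obtain x where "x \<in> set R" "a < x" "x \<le> a + 2 * n"
    using bounded_steps_hit_window[of R "2 * n" a] assms(2) by (auto simp: R_def)
  then show ?thesis using assms(2) by (auto simp: R_def)
qed

definition samplers_in_block :: "nat \<Rightarrow> (nat \<times> nat) set \<Rightarrow> nat \<Rightarrow> nat set" where
  "samplers_in_block L S q = {i. \<exists>j. (i, j) \<in> S \<and> j div L = q}"

text \<open>The first \<open>d * L\<close> local positions of every processor
are cut into \<open>d\<close> blocks of \<open>L\<close> consecutive positions, and the global ranks \<open>0..<d * L * p\<close>
(shifted by one) into \<open>d\<close> bands of \<open>p\<close> runs of \<open>L\<close> ranks: block \<open>q\<close> of processor \<open>i\<close> receives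
run \<open>slot (A q) i\<close> of band \<open>q\<close>, so the processors in \<open>A q\<close> hold the bottom of band \<open>q\<close>.\<close>

definition hard_rank :: "nat \<Rightarrow> nat \<Rightarrow> nat \<Rightarrow> nat \<Rightarrow> (nat \<Rightarrow> nat set) \<Rightarrow> nat \<Rightarrow> nat \<Rightarrow> nat" where
  "hard_rank p n d L A i j =
     (if j < d * L then ((j div L) * p + slot (A (j div L)) i) * L + j mod L + 1
      else d * L * p + i * (n - d * L) + (j - d * L) + 1)"

lemma mult_add_eq_mult_addD:
  fixes a b a' b' m :: nat
  assumes "b < m" "b' < m" "a * m + b = a' * m + b'"
  shows "a = a'" "b = b'"
  using arg_cong[OF assms(3), of "\<lambda>x. x div m"] arg_cong[OF assms(3), of "\<lambda>x. x mod m"] assms(1,2)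
  by simp_all

lemma hard_rank_pos: "0 < hard_rank p n d L A i j"
  by (simp add: hard_rank_def)

locale hard_input =
  fixes p n d L :: nat and A :: "nat \<Rightarrow> nat set"
  assumes L_pos: "0 < L" and blocks_le: "d * L \<le> n"
    and A_subset: "\<And>q. q < d \<Longrightarrow> A q \<subseteq> {..<p}"
begin

abbreviation rank :: "nat \<Rightarrow> nat \<Rightarrow> nat" where
  "rank \<equiv> hard_rank p n d L A"

lemma rank_in_band:
  assumes "i < p" "j < d * L"
  defines "x \<equiv> rank i j - 1"
  shows "x div L div p = j div L" "x div L mod p = slot (A (j div L)) i"
    and "x mod L = j mod L" "x < d * L * p"
proof -
  have q: "j div L < d" using assms(2) L_pos by (simp add: div_less_iff_less_mult)
  have s: "slot (A (j div L)) i < p" using slot_less[OF A_subset[OF q] assms(1)] .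
  have x: "x = ((j div L) * p + slot (A (j div L)) i) * L + j mod L"
    using assms(2) by (simp add: x_def hard_rank_def)
  have "x div L = (j div L) * p + slot (A (j div L)) i" using L_pos by (simp add: x)
  then show "x div L div p = j div L" "x div L mod p = slot (A (j div L)) i"
    using s by simp_all
  show "x mod L = j mod L" using L_pos by (simp add: x)
  have "x < ((j div L) * p + slot (A (j div L)) i) * L + L" using L_pos by (simp add: x)
  also have "\<dots> = Suc ((j div L) * p + slot (A (j div L)) i) * L" by simp
  also have "\<dots> \<le> (Suc (j div L) * p) * L" using s by (intro mult_le_mono1) simp
  also have "\<dots> \<le> (d * p) * L" using q by (intro mult_le_mono1) (simp add: Suc_leI)
  also have "\<dots> = d * L * p" by (simp add: ac_simps)
  finally show "x < d * L * p" .
qed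

lemma rank_in_tail:
  assumes "i < p" "\<not> j < d * L" "j < n"
  shows "rank i j - 1 = d * L * p + (i * (n - d * L) + (j - d * L))"
    and "j - d * L < n - d * L" and "rank i j \<le> p * n"
proof -
  show eq: "rank i j - 1 = d * L * p + (i * (n - d * L) + (j - d * L))"
    using assms(2) by (simp add: hard_rank_def)
  show "j - d * L < n - d * L" using assms by simp
  then have "i * (n - d * L) + (j - d * L) < Suc i * (n - d * L)" by simp
  also have "\<dots> \<le> p * (n - d * L)" using assms(1) by (intro mult_le_mono1) simp
  finally have "rank i j - 1 < d * L * p + p * (n - d * L)" using eq by linarith
  also have "\<dots> = p * n" using blocks_le by (simp add: algebra_simps)
  finally show "rank i j \<le> p * n" using hard_rank_pos[of p n d L A i j] by linarith
qed

lemma rank_range: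
  assumes "i < p" "j < n"
  shows "rank i j \<in> {1..p * n}"
proof (cases "j < d * L")
  case True
  have "rank i j - 1 < d * L * p" using rank_in_band(4)[OF assms(1) True] .
  also have "\<dots> \<le> p * n" using blocks_le by (simp add: mult.commute)
  finally show ?thesis using hard_rank_pos[of p n d L A i j] by simp
next
  case False
  then show ?thesis using rank_in_tail(3)[OF assms(1) False assms(2)] by (simp add: hard_rank_def)
qed

lemma rank_band_less_tail:
  assumes "i < p" "j < d * L" "\<not> j' < d * L"
  shows "rank i j < rank i' j'"
  using rank_in_band(4)[OF assms(1,2)] assms(3) by (simp add: hard_rank_def)

lemma rank_inj:
  assumes "i < p" "j < n" "i' < p" "j' < n" "rank i j = rank i' j'"
  shows "i = i' \<and> j = j'"
proof (cases "j < d * L \<longleftrightarrow> j' < d * L")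
  case False
  then show ?thesis
    using rank_band_less_tail[of i j j' i'] rank_band_less_tail[of i' j' j i] assms by auto
next
  case True
  then consider "j < d * L" "j' < d * L" | "\<not> j < d * L" "\<not> j' < d * L" by blast
  then show ?thesis
  proof cases
    case 1
    note x = rank_in_band[OF assms(1) 1(1)] and x' = rank_in_band[OF assms(3) 1(2)]
    have q: "j div L = j' div L" using x(1) x'(1) assms(5) by simp
    have "j mod L = j' mod L" using x(3) x'(3) assms(5) by simp
    then have "j = j'" using q by (metis div_mult_mod_eq)
    have "j div L < d" using 1 L_pos by (simp add: div_less_iff_less_mult)
    then have "inj (slot (A (j div L)))" by (meson A_subset finite_lessThan finite_subset inj_slot)
    moreover have "slot (A (j div L)) i = slot (A (j div L)) i'" using x(2) x'(2) assms(5) q by metis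
    ultimately show ?thesis using \<open>j = j'\<close> by (simp add: inj_eq)
  next
    case 2
    note x = rank_in_tail[OF assms(1) 2(1) assms(2)] and x' = rank_in_tail[OF assms(3) 2(2) assms(4)]
    have "i * (n - d * L) + (j - d * L) = i' * (n - d * L) + (j' - d * L)"
      using x(1) x'(1) assms(5) by simp
    from mult_add_eq_mult_addD[OF x(2) x'(2) this] 2 show ?thesis by simp
  qed
qed

lemma rank_strict_mono:
  assumes "i < p" "j < j'" "j' < n"
  shows "rank i j < rank i j'"
proof (cases "j' < d * L")
  case band': True
  then have band: "j < d * L" using assms(2) by simp
  show ?thesis
  proof (cases "j div L = j' div L")
    case True
    then have "j div L * L = j' div L * L" by simp
    then have "j mod L < j' mod L"
      using assms(2) div_mult_mod_eq[of j L] div_mult_mod_eq[of j' L] by linarith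
    then show ?thesis using band band' True by (simp add: hard_rank_def)
  next
    case False
    then have "j div L < j' div L" using assms(2) div_le_mono[of j j' L] by simp
    then have "(rank i j - 1) div L div p < (rank i j' - 1) div L div p"
      using rank_in_band(1)[OF assms(1) band] rank_in_band(1)[OF assms(1) band'] by simp
    then have "rank i j - 1 < rank i j' - 1" by (metis div_le_mono not_le)
    then show ?thesis by linarith
  qed
next
  case tail': False
  show ?thesis
  proof (cases "j < d * L")
    case True
    show ?thesis by (rule rank_band_less_tail[OF assms(1) True tail'])
  next
    case tail: False
    have "j - d * L < j' - d * L" using tail assms(2) by linarith
    moreover have "j < n" using assms by simp
    ultimately have "rank i j - 1 < rank i j' - 1"
      unfolding rank_in_tail(1)[OF assms(1) tail \<open>j < n\<close>] rank_in_tail(1)[OF assms(1) tail' assms(3)]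
      by linarith
    then show ?thesis by linarith
  qed
qed

lemma valid_hard_rank:
  assumes "0 < p"
  shows "valid_input (p * n) p rank"
proof -
  let ?f = "\<lambda>(i, j). rank i j" and ?P = "{..<p} \<times> {..<n}"
  have inj: "inj_on ?f ?P" by (rule inj_onI) (auto dest: rank_inj)
  moreover have "?f ` ?P \<subseteq> {1..p * n}" using rank_range by auto
  moreover have "card (?f ` ?P) = card {1..p * n}"
    using card_image[OF inj] by (simp add: card_cartesian_product)
  ultimately have "bij_betw ?f ?P {1..p * n}" by (simp add: bij_betw_def card_subset_eq)
  then show ?thesis using assms rank_strict_mono by (simp add: valid_input_def)
qed

text \<open>A gap of at most \<open>2 * n\<close> ranks cannot jump over the bottom \<open>card (A q) * L\<close> ranks
of band \<open>q\<close>, which are held by block \<open>q\<close> of the processors in \<open>A q\<close>.\<close>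

lemma succeeds_imp_samplers_meet:
  assumes q: "q < d" and gap: "2 * n \<le> card (A q) * L" and A_card: "card (A q) < p"
    and S: "fst st \<subseteq> positions (p * n) p" and succ: "succeeds (p * n) p rank st"
  shows "A q \<inter> samplers_in_block L (fst st) q \<noteq> {}"
proof -
  define out where "out = snd st (observation rank (fst st))"
  have out: "set out \<subseteq> fst st" "two_balanced (p * n) p (map (\<lambda>(i, j). rank i j) out)"
    using succ by (simp_all add: succeeds_def out_def Let_def)
  define a where "a = q * p * L"
  have "a + card (A q) * L < Suc q * p * L"
    using A_card L_pos by (simp add: a_def algebra_simps)
  also have "\<dots> \<le> d * p * L" using q by (intro mult_le_mono1) (simp add: Suc_leI)
  finally have top: "a + card (A q) * L < d * L * p" by (simp add: ac_simps)
  then have "a + 2 * n < d * L * p" using gap by linarith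
  also have "\<dots> \<le> p * n" using mult_le_mono1[OF blocks_le, of p] by (simp add: mult.commute)
  finally have "a + 2 * n < p * n" .
  then obtain i j where ij: "(i, j) \<in> fst st" and win: "a < rank i j" "rank i j \<le> a + 2 * n"
    using two_balanced_hits_window[OF out(2)] out(1) by fastforce
  have i: "i < p" and j: "j < n" using S ij A_card by (auto simp: positions_def)
  have band: "j < d * L"
  proof (rule ccontr)
    assume "\<not> j < d * L"
    then show False using rank_in_tail(1)[OF i _ j] win(2) gap top by fastforce
  qed
  define y where "y = (rank i j - 1) div L"
  have "q * p * L \<le> rank i j - 1" "rank i j - 1 < (q * p + card (A q)) * L"
    using win gap by (simp_all add: a_def algebra_simps)
  then have "q * p \<le> y" "y < q * p + card (A q)"
    using L_pos by (simp_all add: y_def less_eq_div_iff_mult_less_eq div_less_iff_less_mult)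
  then obtain r where "y = q * p + r" "r < card (A q)"
    by (metis add_less_cancel_left le_add_diff_inverse)
  then have "y div p = q" "y mod p < card (A q)"
    using A_card by simp_all
  then have "j div L = q" "slot (A q) i < card (A q)"
    using rank_in_band(1,2)[OF i band] by (simp_all add: y_def)
  then have "i \<in> A q \<inter> samplers_in_block L (fst st) q"
    using ij slot_less_card_iff[OF finite_subset[OF A_subset[OF q] finite_lessThan]]
    by (auto simp: samplers_in_block_def)
  then show ?thesis by blast
qed

end

definition subsets_of_card :: "nat \<Rightarrow> nat \<Rightarrow> nat set set" where
  "subsets_of_card p h = {A. A \<subseteq> {..<p} \<and> card A = h}"

lemma finite_subsets_of_card: "finite (subsets_of_card p h)"
  unfolding subsets_of_card_def by (rule finite_subset[of _ "Pow {..<p}"]) auto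

lemma card_subsets_of_card: "card (subsets_of_card p h) = p choose h"
  using n_subsets[of "{..<p}" h] by (simp add: subsets_of_card_def)

lemma card_subsets_of_card_meeting:
  assumes "T \<subseteq> {..<p}"
  shows "card {A \<in> subsets_of_card p h. A \<inter> T \<noteq> {}} + ((p - card T) choose h) = p choose h"
proof -
  have "{A \<in> subsets_of_card p h. A \<inter> T = {}} = {A. A \<subseteq> {..<p} - T \<and> card A = h}"
    by (auto simp: subsets_of_card_def)
  then have "card {A \<in> subsets_of_card p h. A \<inter> T = {}} = (p - card T) choose h"
    using n_subsets[of "{..<p} - T" h] assms finite_subset[OF assms] by (simp add: card_Diff_subset)
  moreover have "card {A \<in> subsets_of_card p h. A \<inter> T \<noteq> {}} + card {A \<in> subsets_of_card p h. A \<inter> T = {}}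
      = card (subsets_of_card p h)"
    by (subst card_Un_disjoint[symmetric]) (auto intro: finite_subset[OF _ finite_subsets_of_card] arg_cong[of _ _ card])
  ultimately show ?thesis by (simp add: card_subsets_of_card)
qed

lemma choose_le_four_mult_choose_pred:
  fixes m h :: nat
  assumes "4 * h \<le> 3 * m"
  shows "m choose h \<le> 4 * ((m - 1) choose h)"
proof (cases "m = 0")
  case True
  then show ?thesis using assms by simp
next
  case False
  have "m * (m choose h) \<le> 4 * ((m - h) * (m choose h))" using assms by simp
  also have "\<dots> = m * (4 * ((m - 1) choose h))" by (simp add: binomial_absorb_comp)
  finally show ?thesis using False by simp
qed

lemma choose_le_four_pow_mult_choose_diff:
  fixes m h t :: nat
  assumes "4 * h \<le> 3 * (m - t)"
  shows "m choose h \<le> 4 ^ t * ((m - t) choose h)"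
  using assms
proof (induction t)
  case 0
  then show ?case by simp
next
  case (Suc t)
  have "4 * h \<le> 3 * (m - t)" using Suc.prems by simp
  then have "m choose h \<le> 4 ^ t * ((m - t) choose h)" by (rule Suc.IH)
  also have "\<dots> \<le> 4 ^ t * (4 * ((m - t - 1) choose h))"
    using choose_le_four_mult_choose_pred[OF \<open>4 * h \<le> 3 * (m - t)\<close>] by simp
  also have "\<dots> = 4 ^ Suc t * ((m - Suc t) choose h)" by simp
  finally show ?case .
qed

lemma card_subsets_of_card_meeting_le:
  assumes "T \<subseteq> {..<p}" "4 * h \<le> 3 * (p - card T)"
  shows "real (card {A \<in> subsets_of_card p h. A \<inter> T \<noteq> {}}) \<le> (1 - 1 / 4 ^ card T) * real (p choose h)"
proof -
  have "real (p choose h) \<le> 4 ^ card T * real ((p - card T) choose h)"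
    using choose_le_four_pow_mult_choose_diff[OF assms(2)] of_nat_mono by fastforce
  then have "real (p choose h) / 4 ^ card T \<le> real ((p - card T) choose h)"
    by (simp add: field_simps)
  moreover have "real (card {A \<in> subsets_of_card p h. A \<inter> T \<noteq> {}}) + real ((p - card T) choose h)
      = real (p choose h)"
    using arg_cong[OF card_subsets_of_card_meeting[OF assms(1), of h], of real] by simp
  ultimately show ?thesis by (simp add: algebra_simps)
qed

lemma four_pow_le_sqrt:
  fixes x :: real
  assumes "0 < x" "real k \<le> ln x / 4"
  shows "4 ^ k \<le> sqrt x"
proof -
  have "ln (4 :: real) = 2 * ln 2" using ln_realpow[of 2 2] by simp
  then have "ln (4 :: real) \<le> 2" using ln_2_less_1 by simp
  have "(4 :: real) ^ k = exp (real k * ln 4)" by (simp add: exp_of_nat_mult)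
  also have "\<dots> \<le> exp (ln x / 4 * 2)"
    using assms(2) \<open>ln 4 \<le> 2\<close> by (intro exp_mono mult_mono) auto
  also have "\<dots> = sqrt x" using assms(1) by (simp add: powr_half_sqrt[symmetric] powr_def)
  finally show ?thesis .
qed

lemma card_subsets_of_card_meeting_le_sqrt:
  assumes "T \<subseteq> {..<p}" "0 < p" "2 * h \<le> p" "real (card T) \<le> ln (real p) / 4"
  shows "real (card {A \<in> subsets_of_card p h. A \<inter> T \<noteq> {}}) \<le> (1 - 1 / sqrt (real p)) * real (p choose h)"
proof -
  have "ln (real p) \<le> real p - 1" using assms(2) by (intro ln_le_minus_one) simp
  then have "4 * h \<le> 3 * (p - card T)" using assms(3,4) by linarith
  then have "real (card {A \<in> subsets_of_card p h. A \<inter> T \<noteq> {}}) \<le> (1 - 1 / 4 ^ card T) * real (p choose h)"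
    by (rule card_subsets_of_card_meeting_le[OF assms(1)])
  also have "\<dots> \<le> (1 - 1 / sqrt (real p)) * real (p choose h)"
  proof -
    have "4 ^ card T \<le> sqrt (real p)" using assms(2,4) by (intro four_pow_le_sqrt) simp_all
    then show ?thesis
      using assms(2) by (intro mult_right_mono diff_left_mono divide_left_mono) simp_all
  qed
  finally show ?thesis .
qed

lemma sum_card_samplers_in_block_le:
  assumes "finite S" "finite Q"
  shows "(\<Sum>q\<in>Q. card (samplers_in_block L S q)) \<le> card S"
proof -
  have "samplers_in_block L S q \<subseteq> fst ` S" for q
    by (auto simp: samplers_in_block_def intro: rev_image_eqI)
  then have "finite (samplers_in_block L S q)" for q
    using assms(1) finite_subset by blast
  then have "(\<Sum>q\<in>Q. card (samplers_in_block L S q)) = card (Sigma Q (samplers_in_block L S))"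
    using assms(2) by simp
  also have "\<dots> \<le> card ((\<lambda>(i, j). (j div L, i)) ` S)"
  proof (rule card_mono)
    show "Sigma Q (samplers_in_block L S) \<subseteq> (\<lambda>(i, j). (j div L, i)) ` S"
    proof safe
      fix q i assume "i \<in> samplers_in_block L S q"
      then obtain j where "(i, j) \<in> S" "j div L = q" by (auto simp: samplers_in_block_def)
      then show "(q, i) \<in> (\<lambda>(i, j). (j div L, i)) ` S" by (auto intro: rev_image_eqI)
    qed
  qed (use assms(1) in simp)
  also have "\<dots> \<le> card S" by (rule card_image_le[OF assms(1)])
  finally show ?thesis .
qed

lemma prod_le_pow_card_mult_pow_card:
  fixes g :: "'a \<Rightarrow> real"
  assumes "finite Q" "G \<subseteq> Q"
    and "\<And>q. q \<in> Q \<Longrightarrow> 0 \<le> g q \<and> g q \<le> B" "\<And>q. q \<in> G \<Longrightarrow> g q \<le> x * B"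
  shows "(\<Prod>q\<in>Q. g q) \<le> B ^ card Q * x ^ card G"
proof -
  have "(\<Prod>q\<in>Q. g q) \<le> (\<Prod>q\<in>Q. B * (if q \<in> G then x else 1))"
    by (rule prod_mono) (use assms in \<open>auto simp: mult.commute\<close>)
  also have "\<dots> = B ^ card Q * x ^ card G"
    using assms(1,2) by (simp add: prod.distrib prod.If_cases Int_absorb1)
  finally show ?thesis .
qed

lemma card_at_most_threshold_gt:
  fixes t :: "'a \<Rightarrow> nat" and c m :: real
  assumes "finite Q" "0 < c" "real (\<Sum>q\<in>Q. t q) < m * c"
  shows "real (card Q) - m < real (card {q \<in> Q. real (t q) \<le> c})"
proof -
  define dense where "dense = {q \<in> Q. \<not> real (t q) \<le> c}"
  have "real (card dense) * c \<le> (\<Sum>q\<in>dense. real (t q))"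
    using sum_bounded_below[of dense c "\<lambda>q. real (t q)"] by (auto simp: dense_def)
  also have "\<dots> \<le> (\<Sum>q\<in>Q. real (t q))" by (rule sum_mono2) (auto simp: dense_def assms(1))
  also have "\<dots> < m * c" using assms(3) by simp
  finally have "real (card dense) < m" using assms(2) by simp
  moreover have "card ({q \<in> Q. real (t q) \<le> c} \<union> dense) = card {q \<in> Q. real (t q) \<le> c} + card dense"
    by (rule card_Un_disjoint) (auto simp: dense_def assms(1))
  moreover have "{q \<in> Q. real (t q) \<le> c} \<union> dense = Q" by (auto simp: dense_def)
  ultimately show ?thesis by simp
qed

lemma one_minus_inverse_sqrt_pow_le:
  fixes x \<rho> :: real
  assumes "1 \<le> x" "x / 32 \<le> real G" "0 < \<rho>" "(32 * ln (1 / \<rho>))\<^sup>2 \<le> x"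
  shows "(1 - 1 / sqrt x) ^ G \<le> \<rho>"
proof -
  define s where "s = sqrt x"
  have s: "1 \<le> s" "s * s = x" using assms(1) by (simp_all add: s_def)
  have "(1 - 1 / s) ^ G \<le> exp (- (1 / s)) ^ G"
    using exp_ge_add_one_self[of "- (1 / s)"] s(1) by (intro power_mono) (auto simp: divide_simps)
  also have "\<dots> = exp (- (real G / s))" by (simp add: exp_of_nat_mult[symmetric])
  also have "\<dots> \<le> exp (- (s / 32))"
  proof -
    have "s / 32 = x / 32 / s" using s by (simp add: field_simps)
    also have "\<dots> \<le> real G / s" using assms(2) s(1) by (intro divide_right_mono) simp_all
    finally show ?thesis by simp
  qed
  also have "\<dots> \<le> \<rho>"
  proof -
    have "32 * ln (1 / \<rho>) \<le> sqrt ((32 * ln (1 / \<rho>))\<^sup>2)" by (simp only: real_sqrt_abs)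
    also have "\<dots> \<le> s" unfolding s_def using assms(4) by (rule real_sqrt_le_mono)
    finally have "- (s / 32) \<le> ln \<rho>" using assms(3) by (simp add: ln_div)
    then show ?thesis using assms(3) by (metis exp_le_cancel_iff exp_ln)
  qed
  finally show ?thesis by (simp add: s_def)
qed

lemma pmf_exists_in_many_events:
  fixes M :: "'a pmf" and E :: "'b \<Rightarrow> 'a set"
  assumes "finite C" "C \<noteq> {}" "\<And>c. c \<in> C \<Longrightarrow> measure_pmf.prob M (E c) > \<rho>"
  shows "\<exists>x\<in>set_pmf M. real (card {c \<in> C. x \<in> E c}) > \<rho> * real (card C)"
proof (rule ccontr)
  assume "\<not> ?thesis"
  then have few: "real (card {c \<in> C. x \<in> E c}) \<le> \<rho> * real (card C)" if "x \<in> set_pmf M" for x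
    using that by (simp add: not_less)
  have count: "(\<Sum>c\<in>C. indicator (E c) x) = real (card {c \<in> C. x \<in> E c})" for x
    using assms(1) by (simp add: indicator_def sum.If_cases Int_def)
  have "\<rho> * real (card C) < (\<Sum>c\<in>C. measure_pmf.prob M (E c))"
    using sum_strict_mono[OF assms(1,2) assms(3)] by (simp add: mult.commute)
  also have "\<dots> = (\<integral>x. (\<Sum>c\<in>C. indicator (E c) x) \<partial>M)"
    by (simp add: Bochner_Integration.integral_sum measure_pmf.integrable_const_bound[where B=1])
  also have "\<dots> = (\<integral>x. real (card {c \<in> C. x \<in> E c}) \<partial>M)" by (simp only: count)
  also have "\<dots> \<le> \<rho> * real (card C)"
  proof (rule measure_pmf.integral_le_const)
    show "integrable M (\<lambda>x. real (card {c \<in> C. x \<in> E c}))"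
      by (rule measure_pmf.integrable_const_bound[where B="real (card C)"])
        (use assms(1) in \<open>auto intro!: card_mono\<close>)
    show "AE x in M. real (card {c \<in> C. x \<in> E c}) \<le> \<rho> * real (card C)"
      using few by (simp add: AE_measure_pmf_iff)
  qed
  finally show False by simp
qed

lemma card_succeeding_hard_inputs_le_prod:
  assumes L: "0 < L" "d * L \<le> n" and h: "h < p" "2 * n \<le> h * L"
    and S: "fst st \<subseteq> positions (p * n) p"
  shows "card {A \<in> {..<d} \<rightarrow>\<^sub>E subsets_of_card p h. succeeds (p * n) p (hard_rank p n d L A) st}
         \<le> (\<Prod>q<d. card {B \<in> subsets_of_card p h. B \<inter> samplers_in_block L (fst st) q \<noteq> {}})"
proof -
  have "{A \<in> {..<d} \<rightarrow>\<^sub>E subsets_of_card p h. succeeds (p * n) p (hard_rank p n d L A) st}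
      \<subseteq> (\<Pi>\<^sub>E q\<in>{..<d}. {B \<in> subsets_of_card p h. B \<inter> samplers_in_block L (fst st) q \<noteq> {}})"
  proof
    fix A assume "A \<in> {A \<in> {..<d} \<rightarrow>\<^sub>E subsets_of_card p h. succeeds (p * n) p (hard_rank p n d L A) st}"
    then have A: "A \<in> {..<d} \<rightarrow>\<^sub>E subsets_of_card p h" and succ: "succeeds (p * n) p (hard_rank p n d L A) st"
      by auto
    then have Aq: "A q \<subseteq> {..<p}" "card (A q) = h" if "q < d" for q
      using that by (auto simp: subsets_of_card_def)
    interpret hard_input p n d L A using L Aq by unfold_locales auto
    have "A q \<inter> samplers_in_block L (fst st) q \<noteq> {}" if "q < d" for q
      using succeeds_imp_samplers_meet[OF that _ _ S succ] Aq[OF that] h by simp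
    then show "A \<in> (\<Pi>\<^sub>E q\<in>{..<d}. {B \<in> subsets_of_card p h. B \<inter> samplers_in_block L (fst st) q \<noteq> {}})"
      using A by (auto simp: PiE_iff)
  qed
  then have "card {A \<in> {..<d} \<rightarrow>\<^sub>E subsets_of_card p h. succeeds (p * n) p (hard_rank p n d L A) st}
      \<le> card (\<Pi>\<^sub>E q\<in>{..<d}. {B \<in> subsets_of_card p h. B \<inter> samplers_in_block L (fst st) q \<noteq> {}})"
    by (intro card_mono) (auto intro!: finite_PiE simp: finite_subsets_of_card)
  also have "\<dots> = (\<Prod>q<d. card {B \<in> subsets_of_card p h. B \<inter> samplers_in_block L (fst st) q \<noteq> {}})"
    by (simp add: card_PiE)
  finally show ?thesis .
qed

lemma card_succeeding_hard_inputs_le: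
  fixes \<rho> :: real and st :: strategy
  assumes p: "16 \<le> p" "(32 * ln (1 / \<rho>))\<^sup>2 \<le> real p" and \<rho>: "0 < \<rho>" and n: "p \<le> n"
    and S: "fst st \<subseteq> positions (p * n) p"
    and few: "real (card (fst st)) < real p * ln (real p) / 128"
  defines "d \<equiv> p div 8"
  shows "real (card {A \<in> {..<d} \<rightarrow>\<^sub>E subsets_of_card p (4 * d).
                       succeeds (p * n) p (hard_rank p n d (n div d) A) st})
         \<le> \<rho> * real (card ({..<d} \<rightarrow>\<^sub>E subsets_of_card p (4 * d)))"
proof -
  define h L where "h = 4 * d" and "L = n div d"
  define T where "T q = samplers_in_block L (fst st) q" for q
  define G where "G = {q \<in> {..<d}. real (card (T q)) \<le> ln (real p) / 4}"
  define meeting where "meeting q = real (card {B \<in> subsets_of_card p h. B \<inter> T q \<noteq> {}})" for q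
  have d: "2 \<le> d" "8 * d \<le> p" "p < 8 * d + 8" using p(1) unfolding d_def by linarith+
  have L: "0 < L" "d * L \<le> n" using d n by (simp_all add: L_def div_greater_zero_iff)
  have h: "h < p" "2 * h \<le> p" using d by (simp_all add: h_def)
  have "2 * n \<le> h * L"
  proof -
    have "n = d * L + n mod d" by (simp add: L_def)
    moreover have "n mod d < d" using d(1) by simp
    moreover have "d \<le> d * L" using L(1) by simp
    ultimately have "2 * n \<le> 4 * (d * L)" by linarith
    then show ?thesis by (simp add: h_def mult.assoc)
  qed
  have T_sub: "T q \<subseteq> {..<p}" for q
    using S p(1) by (auto simp: T_def samplers_in_block_def positions_def)
  have meeting_le: "meeting q \<le> real (p choose h)" for q
    using card_subsets_of_card_meeting[OF T_sub[of q], of h] by (simp add: meeting_def)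
  have meeting_sparse: "meeting q \<le> (1 - 1 / sqrt (real p)) * real (p choose h)" if "q \<in> G" for q
    using card_subsets_of_card_meeting_le_sqrt[OF T_sub] that p(1) h(2) by (simp add: meeting_def G_def)
  have "real p / 32 \<le> real (card G)"
  proof -
    have "finite (fst st)" using S by (rule finite_subset) (simp add: positions_def)
    then have "(\<Sum>q<d. card (T q)) \<le> card (fst st)"
      unfolding T_def by (intro sum_card_samplers_in_block_le) simp_all
    then have "real (\<Sum>q<d. card (T q)) < real p / 32 * (ln (real p) / 4)" using few by linarith
    then have "real d - real p / 32 < real (card G)"
      unfolding G_def using card_at_most_threshold_gt[of "{..<d}" "ln (real p) / 4"] p(1) by simp
    moreover have "real p / 16 \<le> real d" using d(3) p(1) by simp
    ultimately show ?thesis by linarith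
  qed
  have "real (card {A \<in> {..<d} \<rightarrow>\<^sub>E subsets_of_card p h. succeeds (p * n) p (hard_rank p n d L A) st})
      \<le> (\<Prod>q<d. meeting q)"
    using of_nat_mono[OF card_succeeding_hard_inputs_le_prod[OF L h(1) \<open>2 * n \<le> h * L\<close> S]]
    by (simp add: meeting_def T_def)
  also have "\<dots> \<le> real (p choose h) ^ card {..<d} * (1 - 1 / sqrt (real p)) ^ card G"
    by (rule prod_le_pow_card_mult_pow_card)
      (use meeting_le meeting_sparse in \<open>auto simp: G_def meeting_def\<close>)
  also have "\<dots> \<le> real (p choose h) ^ card {..<d} * \<rho>"
    using one_minus_inverse_sqrt_pow_le[OF _ \<open>real p / 32 \<le> real (card G)\<close> \<rho> p(2)] p(1)
    by (intro mult_left_mono) simp_all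
  also have "\<dots> = \<rho> * real (card ({..<d} \<rightarrow>\<^sub>E subsets_of_card p h))"
    by (simp add: card_PiE card_subsets_of_card)
  finally show ?thesis by (simp add: h_def L_def)
qed

lemma exists_strategy_with_many_samples:
  fixes \<rho> :: real and A :: "strategy pmf"
  assumes p: "16 \<le> p" "(32 * ln (1 / \<rho>))\<^sup>2 \<le> real p" and \<rho>: "0 < \<rho>" and n: "p \<le> n"
    and supp: "\<forall>st \<in> set_pmf A. fst st \<subseteq> positions (p * n) p"
    and succ: "\<forall>r. valid_input (p * n) p r \<longrightarrow> measure_pmf.prob A {st. succeeds (p * n) p r st} > \<rho>"
  shows "\<exists>st \<in> set_pmf A. real (card (fst st)) \<ge> real p * ln (real p) / 128"
proof -
  define d where "d = p div 8"
  define C where "C = {..<d} \<rightarrow>\<^sub>E subsets_of_card p (4 * d)"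
  define E where "E c = {st. succeeds (p * n) p (hard_rank p n d (n div d) c) st}" for c
  have "(\<lambda>q\<in>{..<d}. {..<4 * d}) \<in> C" using p(1) by (auto simp: C_def subsets_of_card_def d_def)
  moreover have "finite C" by (simp add: C_def finite_PiE finite_subsets_of_card)
  moreover have "\<rho> < measure_pmf.prob A (E c)" if "c \<in> C" for c
  proof -
    have "hard_input p n d (n div d) c"
      using that p(1) n by unfold_locales (auto simp: C_def subsets_of_card_def d_def div_greater_zero_iff)
    then show ?thesis using succ hard_input.valid_hard_rank p(1) by (simp add: E_def)
  qed
  ultimately obtain st where "st \<in> set_pmf A" "\<rho> * real (card C) < real (card {c \<in> C. st \<in> E c})"
    using pmf_exists_in_many_events[where C = C and M = A and E = E] by blast
  then show ?thesis
    using card_succeeding_hard_inputs_le[OF p \<rho> n, of st] supp by (force simp: C_def E_def d_def)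
qed

theorem theorem3p9:
  fixes \<rho> :: real
  assumes "0 < \<rho>" and "\<rho> < 1"
  shows "\<exists>c > 0. \<exists>p0. \<forall>p \<ge> p0. \<exists>N0. \<forall>N \<ge> N0. p dvd N \<longrightarrow>
           (\<forall>A :: strategy pmf.
              (\<forall>st \<in> set_pmf A. fst st \<subseteq> positions N p) \<longrightarrow>
              (\<forall>r. valid_input N p r \<longrightarrow>
                   measure_pmf.prob A {st. succeeds N p r st} > \<rho>) \<longrightarrow>
              (\<exists>st \<in> set_pmf A. real (card (fst st)) \<ge> c * real p * ln (real p)))"
proof -
  define p0 where "p0 = max 16 (nat \<lceil>(32 * ln (1 / \<rho>))\<^sup>2\<rceil>)"
  have "\<exists>st \<in> set_pmf A. real (card (fst st)) \<ge> 1 / 128 * real p * ln (real p)"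
    if "p0 \<le> p" "p * p \<le> N" "p dvd N" "\<forall>st \<in> set_pmf A. fst st \<subseteq> positions N p"
      "\<forall>r. valid_input N p r \<longrightarrow> measure_pmf.prob A {st. succeeds N p r st} > \<rho>"
    for p N and A :: "strategy pmf"
  proof -
    have p: "16 \<le> p" "(32 * ln (1 / \<rho>))\<^sup>2 \<le> real p"
      using that(1) real_nat_ceiling_ge[of "(32 * ln (1 / \<rho>))\<^sup>2"] by (auto simp: p0_def)
    obtain n where N: "N = p * n" using \<open>p dvd N\<close> by blast
    then have "p \<le> n" using \<open>p * p \<le> N\<close> p(1) by simp
    then show ?thesis using exists_strategy_with_many_samples[OF p assms(1)] that(4,5) by (simp add: N)
  qed
  then show ?thesis by (intro exI[of _ "1 / 128"] conjI) (simp, blast)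
qed

end
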